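(* Let $F$ be a Ferrers diagram with at least two rows, let $k$ be the length of the first row of $F$ and $\ell$ the length of the second row. Then the divisor $D_{k+1,1}$ on $R(F)$ has positive rank if and only if $(\ell,k-\ell+1)\in F$.
   Context: $\mathbb{N}=\{1,2,3,\dots\}$. A Ferrers diagram is a finite subset $F\subset\mathbb{N}^2$ such that whenever $(x,y)\in F$, either $x=1$ or $(x-1,y)\in F$, and either $y=1$ or $(x,y-1)\in F$; $x$ is the column index and $y$ the row index (row $y$ is $\{(x',y)\in F\}$, and its length is its cardinality). The Ferrers rook graph $R(F)$ is the simple graph with vertex set $F$ in which distinct $(x,y),(x',y')$ are adjacent iff $x=x'$ or $y=y'$. For $(x,y)\in\mathbb{N}^2$, $D_{x,y}=\sum_{(x',y')\in F,\ x'\neq x,\ y'\neq y}(x',y')$. Divisors on a graph: functions $D:V\to\mathbb{Z}$; firing a vertex $v$ means $v$ loses $\deg(v)$ chips and each neighbor gains one; divisors are equivalent if related by a sequence of firings; $\vert D\vert$ is the set of effective (nonnegative) divisors equivalent to $D$; $D$ has positive rank if for every vertex $v$ some $D'\in\vert D\vert$ has $D'(v)>0$. *)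

theory Defs
  imports Main
begin

type_synonym cell = "nat \<times> nat"

text \<open>Ferrers diagram: finite set of cells with positive coordinates (column x, row y),
closed downwards in both coordinates.\<close>
definition ferrers :: "cell set \<Rightarrow> bool" where
  "ferrers F \<longleftrightarrow> finite F \<and>
     (\<forall>(x,y)\<in>F. x \<ge> 1 \<and> y \<ge> 1 \<and>
        (x = 1 \<or> (x - 1, y) \<in> F) \<and> (y = 1 \<or> (x, y - 1) \<in> F))"

definition row :: "cell set \<Rightarrow> nat \<Rightarrow> cell set" where
  "row F y = {p \<in> F. snd p = y}"

definition row_length :: "cell set \<Rightarrow> nat \<Rightarrow> nat" where
  "row_length F y = card (row F y)"

definition rook_adj :: "cell set \<Rightarrow> cell \<Rightarrow> cell \<Rightarrow> bool" where
  "rook_adj F v w \<longleftrightarrow> v \<in> F \<and> w \<in> F \<and> v \<noteq> w \<and> (fst v = fst w \<or> snd v = snd w)"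

definition rook_deg :: "cell set \<Rightarrow> cell \<Rightarrow> nat" where
  "rook_deg F v = card {w. rook_adj F v w}"

text \<open>Divisors are integer functions on cells (only values on F matter).\<close>
type_synonym divisor = "cell \<Rightarrow> int"

definition fire :: "cell set \<Rightarrow> cell \<Rightarrow> divisor \<Rightarrow> divisor" where
  "fire F v D = (\<lambda>w. if w = v then D w - int (rook_deg F v)
                     else if rook_adj F v w then D w + 1 else D w)"

definition fire_step :: "cell set \<Rightarrow> divisor \<Rightarrow> divisor \<Rightarrow> bool" where
  "fire_step F D D' \<longleftrightarrow> (\<exists>v\<in>F. D' = fire F v D)"

definition div_equiv :: "cell set \<Rightarrow> divisor \<Rightarrow> divisor \<Rightarrow> bool" where
  "div_equiv F D D' \<longleftrightarrow> (fire_step F)\<^sup>*\<^sup>* D D'"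

definition effective :: "cell set \<Rightarrow> divisor \<Rightarrow> bool" where
  "effective F D \<longleftrightarrow> (\<forall>v\<in>F. D v \<ge> 0)"

definition linsys :: "cell set \<Rightarrow> divisor \<Rightarrow> divisor set" where
  "linsys F D = {D'. div_equiv F D D' \<and> effective F D'}"

definition positive_rank :: "cell set \<Rightarrow> divisor \<Rightarrow> bool" where
  "positive_rank F D \<longleftrightarrow> (\<forall>v\<in>F. \<exists>D'\<in>linsys F D. D' v > 0)"

definition Dxy :: "cell set \<Rightarrow> nat \<Rightarrow> nat \<Rightarrow> divisor" where
  "Dxy F x y = (\<lambda>p. if p \<in> F \<and> fst p \<noteq> x \<and> snd p \<noteq> y then 1 else 0)"

end

theory Submission
  imports Defs
begin

text \<open>Firing every cell \<open>v\<close> exactly \<open>f v\<close> times turns a divisor \<open>D\<close> into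
  \<open>D - laplacian F f\<close>, and every divisor equivalent to \<open>D\<close> arises in this way.
  The divisor \<open>Dxy F (k + 1) 1\<close> has one chip on every cell outside row 1, so only the cells
  \<open>(x, 1)\<close> have to be reached. For \<open>x \<le> l\<close> it suffices to fire all cells above row 1. For
  \<open>x > l\<close> one fires in addition the columns \<open>1, \<dots>, l\<close>; the cells \<open>(x, 1)\<close> with \<open>x \<le> l\<close>
  then lose \<open>k - l\<close> chips along row 1 and gain one from each cell above them, so the result
  is effective precisely when \<open>(l, k - l + 1) \<in> F\<close>.
  Conversely, undoing the firing of row 1 moves all chips into row 1, each \<open>(x, 1)\<close> receiving
  one per cell above it. If \<open>(l, k - l + 1) \<notin> F\<close>, Dhar's burning argument shows that this
  divisor is superstable with respect to \<open>(k, 1)\<close>, which carries no chip since column \<open>k\<close> has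
  a single cell; hence no equivalent effective divisor puts a chip on \<open>(k, 1)\<close>.\<close>

section \<open>Chip firing and the Laplacian of the rook graph\<close>

definition rook_nbrs :: "cell set \<Rightarrow> cell \<Rightarrow> cell set" where
  "rook_nbrs F w = {u. rook_adj F w u}"

definition laplacian :: "cell set \<Rightarrow> (cell \<Rightarrow> int) \<Rightarrow> cell \<Rightarrow> int" where
  "laplacian F f w = (\<Sum>u\<in>rook_nbrs F w. f w - f u)"

lemma rook_nbrs_iff:
  "u \<in> rook_nbrs F w \<longleftrightarrow> u \<in> F \<and> w \<in> F \<and> w \<noteq> u \<and> (fst w = fst u \<or> snd w = snd u)"
  by (auto simp: rook_nbrs_def rook_adj_def)

lemma finite_rook_nbrs: "finite F \<Longrightarrow> finite (rook_nbrs F w)"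
  by (rule finite_subset[of _ F]) (auto simp: rook_nbrs_iff)

lemma laplacian_add: "laplacian F (\<lambda>w. f w + g w) w = laplacian F f w + laplacian F g w"
  unfolding laplacian_def by (simp add: sum.distrib[symmetric] algebra_simps)

lemma laplacian_nonpos: "\<forall>u\<in>rook_nbrs F w. f w \<le> f u \<Longrightarrow> laplacian F f w \<le> 0"
  unfolding laplacian_def by (intro sum_nonpos) simp

lemma laplacian_le_single:
  assumes "finite F" "u\<^sub>0 \<in> rook_nbrs F w" "\<forall>u\<in>rook_nbrs F w - {u\<^sub>0}. f w \<le> f u"
  shows "laplacian F f w \<le> f w - f u\<^sub>0"
proof -
  have "laplacian F f w = (f w - f u\<^sub>0) + (\<Sum>u\<in>rook_nbrs F w - {u\<^sub>0}. f w - f u)"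
    unfolding laplacian_def using assms(1,2) by (simp add: sum.remove finite_rook_nbrs)
  moreover have "(\<Sum>u\<in>rook_nbrs F w - {u\<^sub>0}. f w - f u) \<le> 0"
    using assms(3) by (intro sum_nonpos) simp
  ultimately show ?thesis by linarith
qed

lemma fire_sub_laplacian:
  assumes fin: "finite F" and v: "v \<in> F"
  shows "fire F v (\<lambda>w. D w - laplacian F f w) = (\<lambda>w. D w - laplacian F (f(v := f v + 1)) w)"
proof
  fix w
  show "fire F v (\<lambda>w. D w - laplacian F f w) w = D w - laplacian F (f(v := f v + 1)) w"
  proof (cases "w = v")
    case True
    have "laplacian F (f(v := f v + 1)) v = (\<Sum>u\<in>rook_nbrs F v. (f v - f u) + 1)"
      unfolding laplacian_def by (rule sum.cong) (auto simp: rook_nbrs_iff)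
    also have "\<dots> = laplacian F f v + int (rook_deg F v)"
      by (simp add: sum.distrib laplacian_def rook_deg_def rook_nbrs_def)
    finally show ?thesis using True by (simp add: fire_def)
  next
    case False
    have "laplacian F (f(v := f v + 1)) w
        = (\<Sum>u\<in>rook_nbrs F w. (f w - f u) - of_bool (u = v))"
      unfolding laplacian_def by (rule sum.cong) (use False in auto)
    also have "\<dots> = laplacian F f w - of_bool (rook_adj F v w)"
      by (simp add: sum_subtractf laplacian_def finite_rook_nbrs[OF fin])
        (auto simp: rook_nbrs_iff rook_adj_def)
    finally show ?thesis using False by (auto simp: fire_def)
  qed
qed

lemma div_equiv_imp_sub_laplacian:
  assumes "div_equiv F D D'" "finite F"
  shows "\<exists>f. D' = (\<lambda>w. D w - laplacian F f w)"
  using assms(1) unfolding div_equiv_def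
proof (induction rule: rtranclp_induct)
  case base
  show ?case by (rule exI[of _ "\<lambda>w. 0"]) (simp add: laplacian_def)
next
  case (step D\<^sub>1 D\<^sub>2)
  then obtain f where f: "D\<^sub>1 = (\<lambda>w. D w - laplacian F f w)" by blast
  obtain v where v: "v \<in> F" "D\<^sub>2 = fire F v D\<^sub>1"
    using step(2) by (auto simp: fire_step_def)
  then have "D\<^sub>2 = (\<lambda>w. D w - laplacian F (f(v := f v + 1)) w)"
    using f fire_sub_laplacian[OF assms(2) v(1)] by simp
  then show ?case by blast
qed

lemma div_equiv_sub_laplacian:
  assumes fin: "finite F" and "\<forall>w. 0 \<le> f w" and "\<forall>w. w \<notin> F \<longrightarrow> f w = 0"
  shows "div_equiv F D (\<lambda>w. D w - laplacian F f w)"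
proof -
  have "div_equiv F D (\<lambda>w. D w - laplacian F f w)"
    if "(\<Sum>w\<in>F. nat (f w)) = n" "\<forall>w. 0 \<le> f w" "\<forall>w. w \<notin> F \<longrightarrow> f w = 0" for n f
    using that
  proof (induction n arbitrary: f)
    case 0
    then have "\<forall>w\<in>F. f w \<le> 0" using fin by simp
    then have "f = (\<lambda>w. 0)" using "0.prems"(2,3) by (intro ext) (metis order.antisym)
    then show ?case by (simp add: laplacian_def div_equiv_def)
  next
    case (Suc n)
    have "\<exists>v\<in>F. 0 < f v" using Suc.prems(1) by - (rule ccontr, simp add: not_less)
    then obtain v where v: "v \<in> F" "0 < f v" ..
    define g where "g = f(v := f v - 1)"
    have "(\<Sum>w\<in>F. nat (f w)) = nat (f v) + (\<Sum>w\<in>F - {v}. nat (g w))"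
      using fin v by (simp add: sum.remove g_def)
    moreover have "(\<Sum>w\<in>F. nat (g w)) = nat (g v) + (\<Sum>w\<in>F - {v}. nat (g w))"
      using fin v by (simp add: sum.remove)
    ultimately have "(\<Sum>w\<in>F. nat (g w)) = n" using Suc.prems(1) v by (simp add: g_def)
    then have "div_equiv F D (\<lambda>w. D w - laplacian F g w)"
      using Suc.IH Suc.prems(2,3) v by (simp add: g_def)
    moreover have "fire F v (\<lambda>w. D w - laplacian F g w) = (\<lambda>w. D w - laplacian F f w)"
      using fire_sub_laplacian[OF fin v(1), of D g] by (simp add: g_def)
    then have "fire_step F (\<lambda>w. D w - laplacian F g w) (\<lambda>w. D w - laplacian F f w)"
      using v(1) unfolding fire_step_def by metis
    ultimately show ?case
      unfolding div_equiv_def by (rule rtranclp.rtrancl_into_rtrancl[of "fire_step F"])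
  qed
  then show ?thesis using assms by blast
qed

lemma sub_laplacian_in_linsys:
  assumes "finite F" "\<forall>w. 0 \<le> f w" "\<forall>w. w \<notin> F \<longrightarrow> f w = 0"
    and "effective F (\<lambda>w. D w - laplacian F f w)"
  shows "(\<lambda>w. D w - laplacian F f w) \<in> linsys F D"
  using div_equiv_sub_laplacian[OF assms(1-3)] assms(4) by (simp add: linsys_def)

definition superstable :: "cell set \<Rightarrow> cell \<Rightarrow> divisor \<Rightarrow> bool" where
  "superstable F q D \<longleftrightarrow>
     (\<forall>S. S \<subseteq> F - {q} \<longrightarrow> S \<noteq> {} \<longrightarrow> (\<exists>u\<in>S. D u < int (card (rook_nbrs F u - S))))"

text \<open>Dhar's argument: the cells where the script \<open>h\<close> is maximal cannot avoid \<open>q\<close>.\<close>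
lemma superstable_laplacian_nonneg:
  assumes fin: "finite F" and q: "q \<in> F" and "superstable F q D"
    and eff: "\<forall>w\<in>F - {q}. 0 \<le> D w - laplacian F h w"
  shows "0 \<le> laplacian F h q"
proof -
  define M where "M = Max (h ` F)"
  define S where "S = {w\<in>F. h w = M}"
  have hM: "\<forall>w\<in>F. h w \<le> M" using fin by (auto simp: M_def)
  show ?thesis
  proof (cases "q \<in> S")
    case True
    then show ?thesis
      unfolding laplacian_def using hM by (intro sum_nonneg) (auto simp: S_def rook_nbrs_iff)
  next
    case False
    have "M \<in> h ` F" unfolding M_def using fin q by (intro Max_in) auto
    then have "S \<noteq> {}" "S \<subseteq> F - {q}" using False by (auto simp: S_def)
    then obtain u where u: "u \<in> S" "D u < int (card (rook_nbrs F u - S))"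
      using \<open>superstable F q D\<close> unfolding superstable_def by blast
    have "int (card (rook_nbrs F u - S)) = (\<Sum>w\<in>rook_nbrs F u. of_bool (w \<notin> S))"
      using finite_rook_nbrs[OF fin] by (simp add: set_diff_eq Int_def)
    also have "\<dots> \<le> laplacian F h u"
      unfolding laplacian_def
      using u(1) hM by (intro sum_mono) (auto simp: S_def rook_nbrs_iff)
    finally have "D u - laplacian F h u < 0" using u(2) by linarith
    moreover have "u \<in> F - {q}" using u(1) \<open>S \<subseteq> F - {q}\<close> by blast
    ultimately show ?thesis using eff by (metis not_le)
  qed
qed

section \<open>Ferrers diagrams\<close>

lemma ferrers_cellD:
  assumes "ferrers F" "(x, y) \<in> F"
  shows "1 \<le> x" "1 \<le> y" "x = 1 \<or> (x - 1, y) \<in> F" "y = 1 \<or> (x, y - 1) \<in> F"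
  using assms unfolding ferrers_def by auto

lemma ferrers_col_closed:
  assumes "ferrers F" "(x, y) \<in> F" "1 \<le> y'" "y' \<le> y"
  shows "(x, y') \<in> F"
  using assms(4,3)
proof (induction y' rule: inc_induct)
  case base
  show ?case by (rule assms(2))
next
  case (step n)
  then show ?case using ferrers_cellD(4)[OF assms(1) step.IH] by simp
qed

lemma ferrers_row_closed:
  assumes "ferrers F" "(x, y) \<in> F" "1 \<le> x'" "x' \<le> x"
  shows "(x', y) \<in> F"
  using assms(4,3)
proof (induction x' rule: inc_induct)
  case base
  show ?case by (rule assms(2))
next
  case (step n)
  then show ?case using ferrers_cellD(3)[OF assms(1) step.IH] by simp
qed

lemma downset_eq_atLeastAtMost_card:
  fixes A :: "nat set"
  assumes "finite A" "\<forall>y\<in>A. 1 \<le> y" "\<And>y y'. y \<in> A \<Longrightarrow> 1 \<le> y' \<Longrightarrow> y' \<le> y \<Longrightarrow> y' \<in> A"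
  shows "A = {1..card A}"
proof (cases "A = {}")
  case False
  have "A = {1..Max A}"
  proof
    show "A \<subseteq> {1..Max A}" using assms(2) Max_ge[OF assms(1)] by auto
    show "{1..Max A} \<subseteq> A" using assms(3)[OF Max_in[OF assms(1) False]] by auto
  qed
  then show ?thesis by (metis card_atLeastAtMost diff_Suc_1)
qed simp

definition col_length :: "cell set \<Rightarrow> nat \<Rightarrow> nat" where
  "col_length F x = card {y. (x, y) \<in> F}"

lemma ferrers_row_iff:
  assumes "ferrers F"
  shows "(x, y) \<in> F \<longleftrightarrow> 1 \<le> x \<and> x \<le> row_length F y"
proof -
  define A where "A = {x. (x, y) \<in> F}"
  have "finite A"
  proof (rule finite_subset)
    show "A \<subseteq> fst ` F" by (force simp: A_def)
    show "finite (fst ` F)" using assms by (simp add: ferrers_def)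
  qed
  then have "A = {1..card A}"
    by (rule downset_eq_atLeastAtMost_card)
      (auto simp: A_def dest: ferrers_cellD(1)[OF assms] intro: ferrers_row_closed[OF assms])
  moreover have "row F y = (\<lambda>x. (x, y)) ` A" by (auto simp: row_def A_def)
  then have "row_length F y = card A"
    unfolding row_length_def by (simp add: card_image inj_on_def)
  ultimately show ?thesis by (metis A_def atLeastAtMost_iff mem_Collect_eq)
qed

lemma ferrers_col_iff:
  assumes "ferrers F"
  shows "(x, y) \<in> F \<longleftrightarrow> 1 \<le> y \<and> y \<le> col_length F x"
proof -
  define A where "A = {y. (x, y) \<in> F}"
  have "finite A"
  proof (rule finite_subset)
    show "A \<subseteq> snd ` F" by (force simp: A_def)
    show "finite (snd ` F)" using assms by (simp add: ferrers_def)
  qed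
  then have "A = {1..card A}"
    by (rule downset_eq_atLeastAtMost_card)
      (auto simp: A_def dest: ferrers_cellD(2)[OF assms] intro: ferrers_col_closed[OF assms])
  then show ?thesis by (metis A_def col_length_def atLeastAtMost_iff mem_Collect_eq)
qed

lemma card_upper_rook_nbrs:
  assumes "ferrers F" "(x, 1) \<in> F"
  shows "card {u \<in> rook_nbrs F (x, 1). snd u \<noteq> 1} = col_length F x - 1"
proof -
  have "{u \<in> rook_nbrs F (x, 1). snd u \<noteq> 1} = (\<lambda>y. (x, y)) ` {2..col_length F x}"
    using assms ferrers_col_iff[OF assms(1)] by (force simp: rook_nbrs_iff)
  then show ?thesis by (simp add: card_image inj_on_def)
qed

lemma rook_nbr_in_row1:
  "u \<in> rook_nbrs F w \<Longrightarrow> snd w \<noteq> 1 \<Longrightarrow> snd u = 1 \<Longrightarrow> u = (fst w, 1)"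
  by (auto simp: rook_nbrs_iff prod_eq_iff)

locale ferrers_two_rows =
  fixes F :: "cell set" and k l :: nat
  assumes ferrers: "ferrers F" and row2_nonempty: "row F 2 \<noteq> {}"
    and k_eq: "k = row_length F 1" and l_eq: "l = row_length F 2"
begin

abbreviation D :: divisor where "D \<equiv> Dxy F (k + 1) 1"

lemma finite_F: "finite F"
  using ferrers by (simp add: ferrers_def)

lemma row1_iff: "(x, 1) \<in> F \<longleftrightarrow> 1 \<le> x \<and> x \<le> k"
  using ferrers_row_iff[OF ferrers] k_eq by simp

lemma row2_iff: "(x, 2) \<in> F \<longleftrightarrow> 1 \<le> x \<and> x \<le> l"
  using ferrers_row_iff[OF ferrers] l_eq by simp

lemma l_pos: "1 \<le> l"
proof -
  obtain p where "p \<in> F" "snd p = 2" using row2_nonempty by (auto simp: row_def)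
  then have "(fst p, 2) \<in> F" by (metis prod.collapse)
  then show ?thesis using row2_iff[of "fst p"] by linarith
qed

lemma l_le_k: "l \<le> k"
  using ferrers_col_closed[OF ferrers, of l 2 1] row1_iff row2_iff l_pos by simp

lemma base_cell: "u \<in> F \<Longrightarrow> (fst u, 1) \<in> F"
  using ferrers_col_closed[OF ferrers, of "fst u" "snd u" 1] ferrers_cellD(2)[OF ferrers, of "fst u" "snd u"]
  by simp

lemma fst_le_k: "u \<in> F \<Longrightarrow> fst u \<le> k"
  using base_cell row1_iff by blast

lemma fst_le_l: "u \<in> F \<Longrightarrow> snd u \<noteq> 1 \<Longrightarrow> fst u \<le> l"
  using ferrers_col_closed[OF ferrers, of "fst u" "snd u" 2] ferrers_cellD(2)[OF ferrers, of "fst u" "snd u"]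
    row2_iff by simp

lemma base_cell_rook_nbr: "u \<in> F \<Longrightarrow> snd u \<noteq> 1 \<Longrightarrow> (fst u, 1) \<in> rook_nbrs F u"
  using base_cell[of u] by (auto simp: rook_nbrs_iff prod_eq_iff)

lemma D_eq: "w \<in> F \<Longrightarrow> D w = of_bool (snd w \<noteq> 1)"
  using fst_le_k[of w] by (auto simp: Dxy_def)

lemma card_right_of_l: "card ((\<lambda>x. (x, 1::nat)) ` {l<..k}) = k - l"
  by (simp add: card_image inj_on_def)

section \<open>Reaching the first row\<close>

definition upper_script :: "cell \<Rightarrow> int" where
  "upper_script w = of_bool (w \<in> F \<and> snd w \<noteq> 1)"

lemma upper_script_effective: "effective F (\<lambda>w. D w - laplacian F upper_script w)"
  unfolding effective_def
proof
  fix w assume w: "w \<in> F"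
  show "0 \<le> D w - laplacian F upper_script w"
  proof (cases "snd w = 1")
    case True
    then have "laplacian F upper_script w \<le> 0"
      by (intro laplacian_nonpos) (simp add: upper_script_def)
    then show ?thesis using D_eq[OF w] by simp
  next
    case False
    have "\<forall>u\<in>rook_nbrs F w - {(fst w, 1)}. upper_script w \<le> upper_script u"
      using rook_nbr_in_row1[of _ F w] False by (auto simp: upper_script_def rook_nbrs_iff)
    then have "laplacian F upper_script w \<le> upper_script w - upper_script (fst w, 1)"
      using finite_F base_cell_rook_nbr[OF w False] by (rule laplacian_le_single[rotated 2])
    then show ?thesis using D_eq[OF w] w False by (simp add: upper_script_def)
  qed
qed

lemma upper_script_positive:
  assumes "1 \<le> x" "x \<le> l"
  shows "0 < D (x, 1) - laplacian F upper_script (x, 1)"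
proof -
  have x2: "(x, 2) \<in> rook_nbrs F (x, 1)"
    using assms row1_iff row2_iff l_le_k by (simp add: rook_nbrs_iff)
  have "\<forall>u\<in>rook_nbrs F (x, 1) - {(x, 2)}. upper_script (x, 1) \<le> upper_script u"
    by (simp add: upper_script_def)
  then have "laplacian F upper_script (x, 1) \<le> upper_script (x, 1) - upper_script (x, 2)"
    using finite_F x2 by (rule laplacian_le_single[rotated 2])
  then show ?thesis using x2 by (simp add: upper_script_def rook_nbrs_iff Dxy_def)
qed

definition upper_left_script :: "cell \<Rightarrow> int" where
  "upper_left_script w = upper_script w + of_bool (w \<in> F \<and> fst w \<le> l)"

lemma upper_left_script_eq:
  "u \<in> F \<Longrightarrow> upper_left_script u = (if snd u \<noteq> 1 then 2 else of_bool (fst u \<le> l))"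
  using fst_le_l[of u] by (simp add: upper_left_script_def upper_script_def)

lemma laplacian_upper_left_script_left:
  assumes c: "(l, k - l + 1) \<in> F" and w: "(x, 1) \<in> F" "x \<le> l"
  shows "laplacian F upper_left_script (x, 1) \<le> 0"
proof -
  let ?N = "rook_nbrs F (x, 1)"
  have "upper_left_script (x, 1) - upper_left_script u = of_bool (l < fst u) - of_bool (snd u \<noteq> 1)"
    if "u \<in> ?N" for u
  proof -
    have "u \<in> F" using that by (simp add: rook_nbrs_iff)
    then show ?thesis
      using upper_left_script_eq[OF w(1)] upper_left_script_eq[of u] fst_le_l[of u] w(2)
      by (cases "snd u = 1") auto
  qed
  then have "laplacian F upper_left_script (x, 1)
      = (\<Sum>u\<in>?N. of_bool (l < fst u) - of_bool (snd u \<noteq> 1))"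
    unfolding laplacian_def by (rule sum.cong[OF refl])
  also have "\<dots> = int (card (?N \<inter> {u. l < fst u})) - int (card {u \<in> ?N. snd u \<noteq> 1})"
    using finite_rook_nbrs[OF finite_F] by (simp add: sum_subtractf Int_def)
  finally have lap: "laplacian F upper_left_script (x, 1)
      = int (card (?N \<inter> {u. l < fst u})) - int (col_length F x - 1)"
    using card_upper_rook_nbrs[OF ferrers w(1)] by simp
  have "?N \<inter> {u. l < fst u} \<subseteq> (\<lambda>x. (x, 1)) ` {l<..k}"
  proof
    fix u assume u: "u \<in> ?N \<inter> {u. l < fst u}"
    then have "u \<in> F" "l < fst u" by (auto simp: rook_nbrs_iff)
    then have "snd u = 1" "fst u \<le> k" using fst_le_l[of u] fst_le_k[of u] by auto
    then show "u \<in> (\<lambda>x. (x, 1)) ` {l<..k}"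
      using \<open>l < fst u\<close> by (auto intro!: image_eqI[of _ _ "fst u"] simp: prod_eq_iff)
  qed
  then have "card (?N \<inter> {u. l < fst u}) \<le> k - l"
    by (metis card_right_of_l card_mono finite_imageI finite_greaterThanAtMost)
  moreover have "(x, k - l + 1) \<in> F"
    using ferrers_row_closed[OF ferrers c] ferrers_cellD(1)[OF ferrers w(1)] w(2) by simp
  then have "k - l + 1 \<le> col_length F x" using ferrers_col_iff[OF ferrers] by blast
  ultimately show ?thesis using lap by linarith
qed

lemma upper_left_script_effective:
  assumes "(l, k - l + 1) \<in> F"
  shows "effective F (\<lambda>w. D w - laplacian F upper_left_script w)"
  unfolding effective_def
proof
  fix w assume w: "w \<in> F"
  show "0 \<le> D w - laplacian F upper_left_script w"
  proof (cases "snd w = 1")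
    case True
    have "laplacian F upper_left_script w \<le> 0"
    proof (cases "fst w \<le> l")
      case True
      then show ?thesis
        using laplacian_upper_left_script_left[OF assms, of "fst w"] w \<open>snd w = 1\<close>
        by (metis prod.collapse)
    next
      case False
      have "\<forall>u\<in>rook_nbrs F w. upper_left_script w \<le> upper_left_script u"
        using False \<open>snd w = 1\<close> w by (simp add: upper_left_script_def upper_script_def)
      then show ?thesis by (rule laplacian_nonpos)
    qed
    then show ?thesis using D_eq[OF w] by simp
  next
    case False
    have "\<forall>u\<in>rook_nbrs F w - {(fst w, 1)}. upper_left_script w \<le> upper_left_script u"
    proof
      fix u assume u: "u \<in> rook_nbrs F w - {(fst w, 1)}"
      then have "u \<in> F" "snd u \<noteq> 1"
        using rook_nbr_in_row1[of u F w] False by (auto simp: rook_nbrs_iff)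
      then show "upper_left_script w \<le> upper_left_script u"
        using upper_left_script_eq[of u] upper_left_script_eq[OF w] False by simp
    qed
    then have "laplacian F upper_left_script w
        \<le> upper_left_script w - upper_left_script (fst w, 1)"
      using finite_F base_cell_rook_nbr[OF w False] by (rule laplacian_le_single[rotated 2])
    then show ?thesis
      using D_eq[OF w] False fst_le_l[OF w False] upper_left_script_eq[OF w]
        upper_left_script_eq[OF base_cell[OF w]]
      by simp
  qed
qed

lemma upper_left_script_positive:
  assumes "(x, 1) \<in> F" "l < x"
  shows "0 < D (x, 1) - laplacian F upper_left_script (x, 1)"
proof -
  have c11: "(1, 1) \<in> rook_nbrs F (x, 1)"
    using assms l_pos row1_iff by (simp add: rook_nbrs_iff)
  have "\<forall>u\<in>rook_nbrs F (x, 1) - {(1, 1)}. upper_left_script (x, 1) \<le> upper_left_script u"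
    using assms by (simp add: upper_left_script_def upper_script_def)
  then have "laplacian F upper_left_script (x, 1)
      \<le> upper_left_script (x, 1) - upper_left_script (1, 1)"
    using finite_F c11 by (rule laplacian_le_single[rotated 2])
  then show ?thesis
    using assms l_pos c11 by (simp add: upper_left_script_def upper_script_def rook_nbrs_iff Dxy_def)
qed

lemma positive_rank_if:
  assumes "(l, k - l + 1) \<in> F"
  shows "positive_rank F D"
  unfolding positive_rank_def
proof
  fix v assume v: "v \<in> F"
  consider "snd v \<noteq> 1" | "snd v = 1" "fst v \<le> l" | "snd v = 1" "l < fst v"
    by linarith
  then show "\<exists>D'\<in>linsys F D. 0 < D' v"
  proof cases
    case 1
    have "D \<in> linsys F D" by (simp add: linsys_def div_equiv_def effective_def Dxy_def)
    then show ?thesis using 1 D_eq[OF v] by force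
  next
    case 2
    let ?D' = "\<lambda>w. D w - laplacian F upper_script w"
    have "?D' \<in> linsys F D"
      by (rule sub_laplacian_in_linsys[OF finite_F _ _ upper_script_effective])
        (simp_all add: upper_script_def)
    moreover have "0 < ?D' v"
      using upper_script_positive[of "fst v"] ferrers_cellD(1)[OF ferrers, of "fst v" "snd v"] v 2
      by (metis prod.collapse)
    ultimately show ?thesis by (intro bexI[where x = ?D']) simp_all
  next
    case 3
    let ?D' = "\<lambda>w. D w - laplacian F upper_left_script w"
    have "?D' \<in> linsys F D"
      by (rule sub_laplacian_in_linsys[OF finite_F _ _ upper_left_script_effective[OF assms]])
        (simp_all add: upper_left_script_def upper_script_def)
    moreover have "0 < ?D' v"
      using upper_left_script_positive[of "fst v"] v 3 by (metis prod.collapse)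
    ultimately show ?thesis by (intro bexI[where x = ?D']) simp_all
  qed
qed

section \<open>The corner cell of row 1\<close>

definition base_row_script :: "cell \<Rightarrow> int" where
  "base_row_script w = of_bool (snd w = 1)"

definition column_divisor :: divisor where
  "column_divisor w = (if snd w = 1 then int (col_length F (fst w)) - 1 else 0)"

lemma D_eq_column_divisor_sub_laplacian:
  assumes w: "w \<in> F"
  shows "D w = column_divisor w - laplacian F base_row_script w"
proof (cases "snd w = 1")
  case True
  then obtain x where x: "w = (x, 1)" by (metis prod.collapse)
  have "1 \<le> col_length F x" using w x ferrers_col_iff[OF ferrers] by blast
  have "laplacian F base_row_script w = (\<Sum>u\<in>rook_nbrs F w. of_bool (snd u \<noteq> 1))"
    unfolding laplacian_def by (rule sum.cong) (simp_all add: base_row_script_def True)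
  also have "\<dots> = int (card {u \<in> rook_nbrs F (x, 1). snd u \<noteq> 1})"
    using finite_rook_nbrs[OF finite_F] x by (simp add: Int_def)
  also have "\<dots> = int (col_length F x) - 1"
    using card_upper_rook_nbrs[OF ferrers, of x] w x \<open>1 \<le> col_length F x\<close> by (simp add: of_nat_diff)
  finally show ?thesis using D_eq[OF w] x by (simp add: column_divisor_def)
next
  case False
  have "laplacian F base_row_script w = (\<Sum>u\<in>rook_nbrs F w. - of_bool (u = (fst w, 1)))"
    unfolding laplacian_def
  proof (rule sum.cong[OF refl])
    fix u assume u: "u \<in> rook_nbrs F w"
    show "base_row_script w - base_row_script u = - of_bool (u = (fst w, 1))"
    proof (cases "snd u = 1")
      case True
      then show ?thesis using rook_nbr_in_row1[OF u False] False by (simp add: base_row_script_def)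
    next
      case False
      then have "u \<noteq> (fst w, 1)" by auto
      then show ?thesis using False \<open>snd w \<noteq> 1\<close> by (simp add: base_row_script_def)
    qed
  qed
  also have "\<dots> = - (\<Sum>u\<in>rook_nbrs F w. of_bool (u = (fst w, 1)))"
    by (rule sum_negf)
  also have "(\<Sum>u\<in>rook_nbrs F w. of_bool (u = (fst w, 1))) = (1::int)"
    using finite_rook_nbrs[OF finite_F] base_cell_rook_nbr[OF w False]
    by (simp only: of_bool_def sum.delta) simp
  finally show ?thesis using D_eq[OF w] False by (simp add: column_divisor_def)
qed

lemma nbr_closed_set_contains_l1:
  assumes "S \<subseteq> F" and closed: "\<And>u. u \<in> S \<Longrightarrow> snd u \<noteq> 1 \<Longrightarrow> rook_nbrs F u \<subseteq> S"
    and u: "u \<in> S" "snd u \<noteq> 1"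
  shows "(l, 1) \<in> S"
proof -
  have uF: "u \<in> F" using u assms(1) by blast
  have x2: "(fst u, 2) \<in> F"
    using ferrers_col_closed[OF ferrers, of "fst u" "snd u" 2] ferrers_cellD(2)[OF ferrers, of "fst u" "snd u"]
      uF u(2) by simp
  have x2S: "(fst u, 2) \<in> S"
  proof (cases "snd u = 2")
    case True
    then show ?thesis using u(1) by (metis prod.collapse)
  next
    case False
    then have "(fst u, 2) \<in> rook_nbrs F u" using x2 uF by (auto simp: rook_nbrs_iff prod_eq_iff)
    then show ?thesis using closed[OF u] by blast
  qed
  have l2: "(l, 2) \<in> F" using row2_iff l_pos by simp
  have l2S: "(l, 2) \<in> S"
  proof (cases "fst u = l")
    case True
    then show ?thesis using x2S by simp
  next
    case False
    then have "(l, 2) \<in> rook_nbrs F (fst u, 2)" using x2 l2 by (simp add: rook_nbrs_iff)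
    then show ?thesis using closed[OF x2S] by auto
  qed
  have "(l, 1) \<in> rook_nbrs F (l, 2)"
    using l2 row1_iff l_pos l_le_k by (simp add: rook_nbrs_iff)
  then show ?thesis using closed[OF l2S] by auto
qed

lemma corner_rook_nbr_outside:
  assumes "l < k" "S \<subseteq> F - {(k, 1)}" "u \<in> S" "snd u = 1"
  shows "(k, 1) \<in> rook_nbrs F u - S"
  using assms row1_iff l_pos by (auto simp: rook_nbrs_iff)

lemma unburnt_set_in_row1:
  assumes nc: "(l, k - l + 1) \<notin> F" and "l < k" and S: "S \<subseteq> F - {(k, 1)}"
    and H: "\<And>u. u \<in> S \<Longrightarrow> int (card (rook_nbrs F u - S)) \<le> column_divisor u"
  shows "\<forall>u\<in>S. snd u = 1"
proof (rule ccontr)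
  assume "\<not> ?thesis"
  then obtain u where u: "u \<in> S" "snd u \<noteq> 1" by blast
  have finite_out: "finite (rook_nbrs F v - S)" for v
    using finite_rook_nbrs[OF finite_F] by blast
  have closed: "rook_nbrs F v \<subseteq> S" if "v \<in> S" "snd v \<noteq> 1" for v
    using H[OF that(1)] that(2) finite_out[of v] by (simp add: column_divisor_def)
  have left: "fst v \<le> l" if v: "v \<in> S" "snd v = 1" for v
  proof -
    have "0 < card (rook_nbrs F v - S)"
      using corner_rook_nbr_outside[OF \<open>l < k\<close> S v] finite_out[of v] card_gt_0_iff by blast
    then have "2 \<le> col_length F (fst v)" using H[OF v(1)] v(2) by (simp add: column_divisor_def)
    then show ?thesis using ferrers_col_iff[OF ferrers, of "fst v" 2] row2_iff by simp
  qed
  have l1S: "(l, 1) \<in> S"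
    using nbr_closed_set_contains_l1[of S] S closed u by blast
  have "(\<lambda>x. (x, 1)) ` {l<..k} \<subseteq> rook_nbrs F (l, 1) - S"
    using left row1_iff l_pos by (force simp: rook_nbrs_iff)
  then have "k - l \<le> card (rook_nbrs F (l, 1) - S)"
    using card_mono[OF finite_out] card_right_of_l by metis
  moreover have "col_length F l \<le> k - l"
    using nc ferrers_col_iff[OF ferrers, of l "k - l + 1"] by simp
  ultimately show False
    using H[OF l1S] \<open>l < k\<close> by (simp add: column_divisor_def)
qed

lemma unburnt_set_empty:
  assumes nc: "(l, k - l + 1) \<notin> F" and "l < k" and S: "S \<subseteq> F - {(k, 1)}"
    and H: "\<And>u. u \<in> S \<Longrightarrow> int (card (rook_nbrs F u - S)) \<le> column_divisor u"
  shows "S = {}"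
proof (rule ccontr)
  assume "S \<noteq> {}"
  then obtain u where u: "u \<in> S" "snd u = 1"
    using unburnt_set_in_row1[OF assms] by blast
  then obtain x where x: "u = (x, 1)" by (metis prod.collapse)
  have uF: "(x, 1) \<in> F" using u(1) x S by blast
  let ?U = "{v \<in> rook_nbrs F u. snd v \<noteq> 1}"
  have "insert (k, 1) ?U \<subseteq> rook_nbrs F u - S"
    using corner_rook_nbr_outside[OF \<open>l < k\<close> S u] unburnt_set_in_row1[OF assms] by auto
  then have "card (insert (k, 1) ?U) \<le> card (rook_nbrs F u - S)"
    using finite_rook_nbrs[OF finite_F, of u] by (intro card_mono) auto
  moreover have "card (insert (k, 1) ?U) = Suc (card ?U)"
    using finite_rook_nbrs[OF finite_F, of u] by (intro card_insert_disjoint) auto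
  moreover have "1 \<le> col_length F x" using uF ferrers_col_iff[OF ferrers] by blast
  ultimately show False
    using H[OF u(1)] card_upper_rook_nbrs[OF ferrers uF] x by (simp add: column_divisor_def)
qed

lemma column_divisor_superstable:
  assumes "(l, k - l + 1) \<notin> F" and "l < k"
  shows "superstable F (k, 1) column_divisor"
  unfolding superstable_def
proof (intro allI impI)
  fix S assume S: "S \<subseteq> F - {(k, 1)}" "S \<noteq> {}"
  show "\<exists>u\<in>S. column_divisor u < int (card (rook_nbrs F u - S))"
  proof (rule ccontr)
    assume "\<not> ?thesis"
    then have "S = {}"
      using unburnt_set_empty[OF assms S(1)] by (simp add: not_less)
    with S(2) show False ..
  qed
qed

lemma positive_rank_only_if:
  assumes "positive_rank F D"
  shows "(l, k - l + 1) \<in> F"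
proof (rule ccontr)
  assume nc: "(l, k - l + 1) \<notin> F"
  then have "l < k" using l_le_k l_pos row1_iff by (cases "l = k") auto
  then have k1: "(k, 1) \<in> F" and "(k, 2) \<notin> F" using row1_iff row2_iff l_pos by auto
  obtain D' where D': "D' \<in> linsys F D" "0 < D' (k, 1)"
    using assms k1 unfolding positive_rank_def by blast
  then obtain f where f: "D' = (\<lambda>w. D w - laplacian F f w)"
    using div_equiv_imp_sub_laplacian[OF _ finite_F] by (auto simp: linsys_def)
  define h where "h = (\<lambda>w. f w + base_row_script w)"
  have D'_eq: "D' w = column_divisor w - laplacian F h w" if "w \<in> F" for w
    using f D_eq_column_divisor_sub_laplacian[OF that] laplacian_add[of F f base_row_script w]
    by (simp add: h_def)
  have "0 \<le> laplacian F h (k, 1)"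
    using superstable_laplacian_nonneg[OF finite_F k1 column_divisor_superstable[OF nc \<open>l < k\<close>]]
      D'(1) D'_eq by (simp add: linsys_def effective_def)
  moreover have "column_divisor (k, 1) \<le> 0"
    using \<open>(k, 2) \<notin> F\<close> ferrers_col_iff[OF ferrers, of k 2] by (simp add: column_divisor_def)
  ultimately show False using D'(2) D'_eq[OF k1] by simp
qed

end

theorem proposition3p2:
  fixes F :: "cell set" and k l :: nat
  assumes "ferrers F"
    and "row F 2 \<noteq> {}"
    and "k = row_length F 1"
    and "l = row_length F 2"
  shows "positive_rank F (Dxy F (k + 1) 1) \<longleftrightarrow> (l, k - l + 1) \<in> F"
proof -
  interpret ferrers_two_rows F k l
    using assms by unfold_locales
  show ?thesis
    using positive_rank_if positive_rank_only_if by blast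
qed

end
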